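(* Let $n\ge m\ge0$, $d\ge1$, and let $t_2,\dots,t_n,s_1,\dots,s_m$ be integers. Let $\tilde\omega$ be the class of $\prod_{i=2}^nx_i^{t_i}\prod_{j=1}^my_j^{s_j}\,\frac{dx_2}{x_2}\wedge\cdots\wedge\frac{dx_n}{x_n}\wedge\frac{dy_1}{y_1}\wedge\cdots\wedge\frac{dy_m}{y_m}$ in $\mathcal{H}^{n+m-1}_{\mathrm{dR}}(U/S,f)$. Then for every $2\le i\le n$ and $1\le j\le m$, $$(D-t_i/d)\,\tilde\omega=x_i^d\cdot\tilde\omega\qquad\text{and}\qquad (D+s_j/d)\,\tilde\omega=y_j^d\cdot\tilde\omega,$$ where $x_i^d\cdot\tilde\omega$ (resp. $y_j^d\cdot\tilde\omega$) is the class of the form multiplied by $x_i^d$ (resp. $y_j^d$).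
   Context: Varieties over $\mathbb{C}$. $S=\mathbb{G}_m\setminus\{1\}$ if $n=m$, $S=\mathbb{G}_m$ if $n>m$, coordinate $z$. $U=S\times\mathbb{G}_m^{n+m-1}$ with coordinates $(z,x_2,\dots,x_n,y_1,\dots,y_m)$, $f=\sum_{i=2}^nx_i^d-\sum_jy_j^d+z\prod_jy_j^d/\prod_{i\ge2}x_i^d$. $\mathcal{H}^{n+m-1}_{\mathrm{dR}}(U/S,f)$ is the $(n+m-1)$-st cohomology of the relative twisted de Rham complex $(\Omega^\bullet_{U/S},d+df)$, and $D=\nabla_{z\partial_z}$ is the Gauss–Manin connection, $\nabla_{z\partial_z}[g\eta]=[(z\partial_zg+z\partial_z(f)\,g)\eta]$. *)

theory Defs
  imports "HOL-Analysis.Analysis"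
begin

text \<open>Points of the ambient space: (z, x, y) with x i (2 \<le> i \<le> n) and y j (1 \<le> j \<le> m)
  the fibre coordinates. Other components of x, y are irrelevant dummies.\<close>
type_synonym pt = "complex \<times> (nat \<Rightarrow> complex) \<times> (nat \<Rightarrow> complex)"

definition zc :: "pt \<Rightarrow> complex" where "zc p = fst p"
definition xc :: "pt \<Rightarrow> nat \<Rightarrow> complex" where "xc p = fst (snd p)"
definition yc :: "pt \<Rightarrow> nat \<Rightarrow> complex" where "yc p = snd (snd p)"

definition Sbase :: "nat \<Rightarrow> nat \<Rightarrow> complex set" where
  "Sbase n m = {z. z \<noteq> 0 \<and> (n = m \<longrightarrow> z \<noteq> 1)}"

definition Udom :: "nat \<Rightarrow> nat \<Rightarrow> pt set" where
  "Udom n m = {p. zc p \<in> Sbase n m \<and> (\<forall>i\<in>{2..n}. xc p i \<noteq> 0) \<and> (\<forall>j\<in>{1..m}. yc p j \<noteq> 0)}"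

inductive_set regU :: "nat \<Rightarrow> nat \<Rightarrow> (pt \<Rightarrow> complex) set" for n m where
  const: "(\<lambda>p. c) \<in> regU n m"
| zcoord: "zc \<in> regU n m"
| zinv: "(\<lambda>p. inverse (zc p)) \<in> regU n m"
| zm1inv: "n = m \<Longrightarrow> (\<lambda>p. inverse (zc p - 1)) \<in> regU n m"
| xcoord: "i \<in> {2..n} \<Longrightarrow> (\<lambda>p. xc p i) \<in> regU n m"
| xinv: "i \<in> {2..n} \<Longrightarrow> (\<lambda>p. inverse (xc p i)) \<in> regU n m"
| ycoord: "j \<in> {1..m} \<Longrightarrow> (\<lambda>p. yc p j) \<in> regU n m"
| yinv: "j \<in> {1..m} \<Longrightarrow> (\<lambda>p. inverse (yc p j)) \<in> regU n m"
| add: "g \<in> regU n m \<Longrightarrow> h \<in> regU n m \<Longrightarrow> (\<lambda>p. g p + h p) \<in> regU n m"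
| mult: "g \<in> regU n m \<Longrightarrow> h \<in> regU n m \<Longrightarrow> (\<lambda>p. g p * h p) \<in> regU n m"

definition fpot :: "nat \<Rightarrow> nat \<Rightarrow> nat \<Rightarrow> pt \<Rightarrow> complex" where
  "fpot n m d p = (\<Sum>i=2..n. xc p i ^ d) - (\<Sum>j=1..m. yc p j ^ d)
      + zc p * (\<Prod>j=1..m. yc p j ^ d) / (\<Prod>i=2..n. xc p i ^ d)"

definition theta_z :: "(pt \<Rightarrow> complex) \<Rightarrow> pt \<Rightarrow> complex" where
  "theta_z g p = zc p * deriv (\<lambda>w. g (w, xc p, yc p)) (zc p)"
definition theta_x :: "nat \<Rightarrow> (pt \<Rightarrow> complex) \<Rightarrow> pt \<Rightarrow> complex" where
  "theta_x i g p = xc p i * deriv (\<lambda>w. g (zc p, (xc p)(i := w), yc p)) (xc p i)"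
definition theta_y :: "nat \<Rightarrow> (pt \<Rightarrow> complex) \<Rightarrow> pt \<Rightarrow> complex" where
  "theta_y j g p = yc p j * deriv (\<lambda>w. g (zc p, xc p, (yc p)(j := w))) (yc p j)"

text \<open>Top-degree relative forms are g \<cdot> omega0 with omega0 = dx_2/x_2 \<and> ... \<and> dy_m/y_m and
  g \<in> O(U) (free rank one module). Forms of degree n+m-2 are \<Sum>_k h_k \<cdot> (omega0 with the k-th
  factor omitted), and (d + df) maps this to (\<Sum>_k \<plusminus>(theta_k h_k + theta_k(f) h_k)) \<cdot> omega0.
  Hence g \<cdot> omega0 and g' \<cdot> omega0 have the same class in H^{n+m-1}_dR(U/S,f) iff the following holds
  (the signs can be absorbed into the h_k).\<close>
definition same_class :: "nat \<Rightarrow> nat \<Rightarrow> nat \<Rightarrow> (pt \<Rightarrow> complex) \<Rightarrow> (pt \<Rightarrow> complex) \<Rightarrow> bool" where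
  "same_class n m d g g' \<longleftrightarrow>
     (\<exists>hx hy. (\<forall>i\<in>{2..n}. hx i \<in> regU n m) \<and> (\<forall>j\<in>{1..m}. hy j \<in> regU n m) \<and>
        (\<forall>p\<in>Udom n m. g p - g' p =
            (\<Sum>i=2..n. theta_x i (hx i) p + theta_x i (fpot n m d) p * hx i p)
          + (\<Sum>j=1..m. theta_y j (hy j) p + theta_y j (fpot n m d) p * hy j p)))"

text \<open>Gauss--Manin connection D = nabla_{z d/dz} on representatives:
  D[g omega0] = [(z d_z g + z d_z(f) g) omega0].\<close>
definition GM :: "nat \<Rightarrow> nat \<Rightarrow> nat \<Rightarrow> (pt \<Rightarrow> complex) \<Rightarrow> pt \<Rightarrow> complex" where
  "GM n m d g p = theta_z g p + theta_z (fpot n m d) p * g p"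

definition monom :: "nat \<Rightarrow> nat \<Rightarrow> (nat \<Rightarrow> int) \<Rightarrow> (nat \<Rightarrow> int) \<Rightarrow> pt \<Rightarrow> complex" where
  "monom n m t s p = (\<Prod>i=2..n. xc p i powi t i) * (\<Prod>j=1..m. yc p j powi s j)"

end

theory Submission
  imports Defs
begin

text \<open>Write Q (\<open>fpot_zterm\<close>) for the term z \<Prod> y_j^d / \<Prod> x_i^d of f. The coefficient of
  \<open>\<tilde>\<omega>\<close> does not involve z and z \<partial>_z f = Q, so D acts on \<open>\<tilde>\<omega>\<close> as multiplication by Q.
  Since x_i \<partial>_{x_i} f = d x_i^d - d Q, applying d + df to the monomial form with dx_i/x_i
  omitted gives (t_i + d x_i^d - d Q) \<open>\<tilde>\<omega>\<close>; divided by -d, this exact form is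
  (D - t_i/d) \<open>\<tilde>\<omega>\<close> - x_i^d \<open>\<tilde>\<omega>\<close>. Likewise for y_j, where y_j \<partial>_{y_j} f = d Q - d y_j^d.\<close>

lemma euler_deriv_power_int_binomial:
  fixes w a b c :: "'a::real_normed_field"
  assumes "w \<noteq> 0"
  shows "w * deriv (\<lambda>v. a + b * v powi k + c * v powi l) w
           = of_int k * b * w powi k + of_int l * c * w powi l"
proof -
  have "((\<lambda>v. a + b * v powi k + c * v powi l) has_field_derivative
          b * (of_int k * w powi (k - 1)) + c * (of_int l * w powi (l - 1))) (at w)"
    using assms by (auto intro!: derivative_eq_intros)
  then have "w * deriv (\<lambda>v. a + b * v powi k + c * v powi l) w
      = of_int k * b * (w * w powi (k - 1)) + of_int l * c * (w * w powi (l - 1))"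
    by (simp add: DERIV_imp_deriv algebra_simps)
  also have "\<dots> = of_int k * b * w powi k + of_int l * c * w powi l"
    using power_int_minus_mult[of w] assms by (simp add: mult.commute)
  finally show ?thesis .
qed

lemma prod_fun_upd_remove:
  assumes "finite A" "i \<in> A"
  shows "(\<Prod>k\<in>A. g k ((X(i := w)) k)) = g i w * (\<Prod>k\<in>A-{i}. g k (X k))"
proof -
  have "(\<Prod>k\<in>A. g k ((X(i := w)) k)) = g i w * (\<Prod>k\<in>A-{i}. g k ((X(i := w)) k))"
    using assms by (simp add: prod.remove)
  also have "(\<Prod>k\<in>A-{i}. g k ((X(i := w)) k)) = (\<Prod>k\<in>A-{i}. g k (X k))"
    by (rule prod.cong) auto
  finally show ?thesis .
qed

lemma sum_fun_upd_remove:
  assumes "finite A" "i \<in> A"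
  shows "(\<Sum>k\<in>A. g k ((X(i := w)) k)) = g i w + (\<Sum>k\<in>A-{i}. g k (X k))"
proof -
  have "(\<Sum>k\<in>A. g k ((X(i := w)) k)) = g i w + (\<Sum>k\<in>A-{i}. g k ((X(i := w)) k))"
    using assms by (simp add: sum.remove)
  also have "(\<Sum>k\<in>A-{i}. g k ((X(i := w)) k)) = (\<Sum>k\<in>A-{i}. g k (X k))"
    by (rule sum.cong) auto
  finally show ?thesis .
qed

definition fpot_zterm :: "nat \<Rightarrow> nat \<Rightarrow> nat \<Rightarrow> pt \<Rightarrow> complex" where
  "fpot_zterm n m d p = zc p * (\<Prod>j=1..m. yc p j ^ d) / (\<Prod>i=2..n. xc p i ^ d)"

lemma fpot_fun_upd_x:
  assumes "i \<in> {2..n}"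
  shows "fpot n m d (z, X(i := w), Y)
           = ((\<Sum>k\<in>{2..n}-{i}. X k ^ d) - (\<Sum>j=1..m. Y j ^ d))
             + 1 * w powi int d
             + z * (\<Prod>j=1..m. Y j ^ d) / (\<Prod>k\<in>{2..n}-{i}. X k ^ d) * w powi (- int d)"
  unfolding fpot_def xc_def yc_def zc_def fst_conv snd_conv
    sum_fun_upd_remove[where g = "\<lambda>_ x. x ^ d", OF finite_atLeastAtMost assms]
    prod_fun_upd_remove[where g = "\<lambda>_ x. x ^ d", OF finite_atLeastAtMost assms]
  by (simp add: power_int_minus divide_inverse mult_ac)

lemma fpot_fun_upd_y:
  assumes "j \<in> {1..m}"
  shows "fpot n m d (z, X, Y(j := w))
           = ((\<Sum>k=2..n. X k ^ d) - (\<Sum>l\<in>{1..m}-{j}. Y l ^ d))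
             + (- 1) * w powi int d
             + z * (\<Prod>l\<in>{1..m}-{j}. Y l ^ d) / (\<Prod>k=2..n. X k ^ d) * w powi int d"
  unfolding fpot_def xc_def yc_def zc_def fst_conv snd_conv
    sum_fun_upd_remove[where g = "\<lambda>_ x. x ^ d", OF finite_atLeastAtMost assms]
    prod_fun_upd_remove[where g = "\<lambda>_ x. x ^ d", OF finite_atLeastAtMost assms]
  by (simp add: algebra_simps)

lemma monom_fun_upd_x:
  assumes "i \<in> {2..n}"
  shows "monom n m t s (z, X(i := w), Y)
           = (\<Prod>k\<in>{2..n}-{i}. X k powi t k) * (\<Prod>j=1..m. Y j powi s j) * w powi t i"
  unfolding monom_def xc_def yc_def fst_conv snd_conv
    prod_fun_upd_remove[where g = "\<lambda>k x. x powi t k", OF finite_atLeastAtMost assms]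
  by (simp add: mult_ac)

lemma monom_fun_upd_y:
  assumes "j \<in> {1..m}"
  shows "monom n m t s (z, X, Y(j := w))
           = (\<Prod>k=2..n. X k powi t k) * (\<Prod>l\<in>{1..m}-{j}. Y l powi s l) * w powi s j"
  unfolding monom_def xc_def yc_def fst_conv snd_conv
    prod_fun_upd_remove[where g = "\<lambda>k x. x powi s k", OF finite_atLeastAtMost assms]
  by (simp add: mult_ac)

lemma pt_eta: "(zc p, xc p, yc p) = p"
  by (simp add: zc_def xc_def yc_def)

lemma theta_x_cmult_monom:
  assumes "i \<in> {2..n}" "xc p i \<noteq> 0"
  shows "theta_x i (\<lambda>q. c * monom n m t s q) p = of_int (t i) * (c * monom n m t s p)"
proof -
  define R where "R = (\<Prod>k\<in>{2..n}-{i}. xc p k powi t k) * (\<Prod>j=1..m. yc p j powi s j)"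
  have slice: "(\<lambda>w. c * monom n m t s (zc p, (xc p)(i := w), yc p))
                 = (\<lambda>w. 0 + c * R * w powi t i + 0 * w powi 0)"
    by (simp add: monom_fun_upd_x[OF assms(1)] R_def mult_ac)
  have "monom n m t s p = R * xc p i powi t i"
    using monom_fun_upd_x[OF assms(1), where z = "zc p" and X = "xc p" and w = "xc p i" and Y = "yc p"]
    by (simp add: R_def pt_eta)
  then show ?thesis
    unfolding theta_x_def slice euler_deriv_power_int_binomial[OF assms(2)] by (simp add: mult_ac)
qed

lemma theta_y_cmult_monom:
  assumes "j \<in> {1..m}" "yc p j \<noteq> 0"
  shows "theta_y j (\<lambda>q. c * monom n m t s q) p = of_int (s j) * (c * monom n m t s p)"
proof -
  define R where "R = (\<Prod>k=2..n. xc p k powi t k) * (\<Prod>l\<in>{1..m}-{j}. yc p l powi s l)"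
  have slice: "(\<lambda>w. c * monom n m t s (zc p, xc p, (yc p)(j := w)))
                 = (\<lambda>w. 0 + c * R * w powi s j + 0 * w powi 0)"
    by (simp add: monom_fun_upd_y[OF assms(1)] R_def mult_ac)
  have "monom n m t s p = R * yc p j powi s j"
    using monom_fun_upd_y[OF assms(1), where z = "zc p" and X = "xc p" and w = "yc p j" and Y = "yc p"]
    by (simp add: R_def pt_eta)
  then show ?thesis
    unfolding theta_y_def slice euler_deriv_power_int_binomial[OF assms(2)] by (simp add: mult_ac)
qed

lemma theta_x_fpot:
  assumes "i \<in> {2..n}" "xc p i \<noteq> 0"
  shows "theta_x i (fpot n m d) p = of_nat d * xc p i ^ d - of_nat d * fpot_zterm n m d p"
proof -
  define K where "K = zc p * (\<Prod>j=1..m. yc p j ^ d) / (\<Prod>k\<in>{2..n}-{i}. xc p k ^ d)"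
  have "K * xc p i powi (- d) = fpot_zterm n m d p"
    using assms(1)
    by (simp add: K_def fpot_zterm_def prod.remove power_int_minus divide_inverse mult_ac)
  have "theta_x i (fpot n m d) p = of_int d * 1 * xc p i powi d + of_int (- d) * K * xc p i powi (- d)"
    unfolding theta_x_def fpot_fun_upd_x[OF assms(1)] K_def
    by (rule euler_deriv_power_int_binomial[OF assms(2)])
  also have "\<dots> = of_nat d * xc p i ^ d - of_nat d * (K * xc p i powi (- d))"
    by simp
  also note \<open>K * xc p i powi (- d) = fpot_zterm n m d p\<close>
  finally show ?thesis .
qed

lemma theta_y_fpot:
  assumes "j \<in> {1..m}" "yc p j \<noteq> 0"
  shows "theta_y j (fpot n m d) p = of_nat d * fpot_zterm n m d p - of_nat d * yc p j ^ d"
proof -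
  define K where "K = zc p * (\<Prod>l\<in>{1..m}-{j}. yc p l ^ d) / (\<Prod>k=2..n. xc p k ^ d)"
  have "K * yc p j ^ d = fpot_zterm n m d p"
    using assms(1) by (simp add: K_def fpot_zterm_def prod.remove mult_ac)
  have "theta_y j (fpot n m d) p = of_int d * (- 1) * yc p j powi d + of_int d * K * yc p j powi d"
    unfolding theta_y_def fpot_fun_upd_y[OF assms(1)] K_def
    by (rule euler_deriv_power_int_binomial[OF assms(2)])
  also have "\<dots> = of_nat d * (K * yc p j ^ d) - of_nat d * yc p j ^ d"
    by simp
  also note \<open>K * yc p j ^ d = fpot_zterm n m d p\<close>
  finally show ?thesis .
qed

lemma theta_z_fpot: "theta_z (fpot n m d) p = fpot_zterm n m d p"
proof -
  define P where "P = (\<Prod>j=1..m. yc p j ^ d) / (\<Prod>k=2..n. xc p k ^ d)"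
  have slice: "(\<lambda>w. fpot n m d (w, xc p, yc p))
                 = (\<lambda>w. (\<Sum>i=2..n. xc p i ^ d) - (\<Sum>j=1..m. yc p j ^ d) + w * P)"
    by (simp add: fpot_def P_def xc_def yc_def zc_def)
  have "deriv (\<lambda>w. fpot n m d (w, xc p, yc p)) (zc p) = P"
    unfolding slice by (rule DERIV_imp_deriv) (auto intro!: derivative_eq_intros)
  then show ?thesis
    by (simp add: theta_z_def fpot_zterm_def P_def)
qed

lemma theta_z_monom: "theta_z (monom n m t s) p = 0"
  by (simp add: theta_z_def monom_def xc_def yc_def)

lemma GM_monom: "GM n m d (monom n m t s) p = fpot_zterm n m d p * monom n m t s p"
  by (simp add: GM_def theta_z_fpot theta_z_monom)

lemma regU_prod: "finite A \<Longrightarrow> (\<And>a. a \<in> A \<Longrightarrow> g a \<in> regU n m) \<Longrightarrow> (\<lambda>p. \<Prod>a\<in>A. g a p) \<in> regU n m"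
proof (induction A rule: finite_induct)
  case empty
  then show ?case using regU.const[of 1] by simp
next
  case (insert a A)
  then show ?case using regU.mult[of "g a" n m "\<lambda>p. \<Prod>a\<in>A. g a p"] by simp
qed

lemma regU_power: "g \<in> regU n m \<Longrightarrow> (\<lambda>p. g p ^ k) \<in> regU n m"
  by (induction k) (auto intro: regU.intros)

lemma regU_power_int:
  "g \<in> regU n m \<Longrightarrow> (\<lambda>p. inverse (g p)) \<in> regU n m \<Longrightarrow> (\<lambda>p. g p powi k) \<in> regU n m"
  unfolding power_int_def by (cases "0 \<le> k") (auto intro: regU_power)

lemma regU_cmult_monom: "(\<lambda>p. c * monom n m t s p) \<in> regU n m"
  unfolding monom_def
  by (intro regU.mult regU.const regU_prod regU_power_int finite_atLeastAtMost)
     (auto intro: regU.intros)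

lemma same_classI_x:
  assumes "i \<in> {2..n}" "h \<in> regU n m"
    and "\<And>p. p \<in> Udom n m \<Longrightarrow> g p - g' p = theta_x i h p + theta_x i (fpot n m d) p * h p"
  shows "same_class n m d g g'"
  unfolding same_class_def
proof (intro exI conjI ballI)
  define hx where "hx k = (if k = i then h else (\<lambda>_. 0))" for k
  show "hx k \<in> regU n m" for k
    using assms(2) by (simp add: hx_def regU.const)
  show "(\<lambda>_. 0) \<in> regU n m"
    by (rule regU.const)
  fix p assume "p \<in> Udom n m"
  have "theta_x k (hx k) p + theta_x k (fpot n m d) p * hx k p
          = (if k = i then theta_x i h p + theta_x i (fpot n m d) p * h p else 0)" for k
    by (simp add: hx_def theta_x_def)
  then show "g p - g' p =
      (\<Sum>k=2..n. theta_x k (hx k) p + theta_x k (fpot n m d) p * hx k p)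
    + (\<Sum>j=1..m. theta_y j (\<lambda>_. 0) p + theta_y j (fpot n m d) p * 0)"
    using assms(1) assms(3)[OF \<open>p \<in> Udom n m\<close>] by (simp add: theta_y_def)
qed

lemma same_classI_y:
  assumes "j \<in> {1..m}" "h \<in> regU n m"
    and "\<And>p. p \<in> Udom n m \<Longrightarrow> g p - g' p = theta_y j h p + theta_y j (fpot n m d) p * h p"
  shows "same_class n m d g g'"
  unfolding same_class_def
proof (intro exI conjI ballI)
  define hy where "hy l = (if l = j then h else (\<lambda>_. 0))" for l
  show "(\<lambda>_. 0) \<in> regU n m"
    by (rule regU.const)
  show "hy l \<in> regU n m" for l
    using assms(2) by (simp add: hy_def regU.const)
  fix p assume "p \<in> Udom n m"
  have "theta_y l (hy l) p + theta_y l (fpot n m d) p * hy l p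
          = (if l = j then theta_y j h p + theta_y j (fpot n m d) p * h p else 0)" for l
    by (simp add: hy_def theta_y_def)
  then show "g p - g' p =
      (\<Sum>i=2..n. theta_x i (\<lambda>_. 0) p + theta_x i (fpot n m d) p * 0)
    + (\<Sum>l=1..m. theta_y l (hy l) p + theta_y l (fpot n m d) p * hy l p)"
    using assms(1) assms(3)[OF \<open>p \<in> Udom n m\<close>] by (simp add: theta_x_def)
qed

lemma same_class_GM_monom_x:
  assumes "i \<in> {2..n}" "1 \<le> d"
  shows "same_class n m d
           (\<lambda>p. GM n m d (monom n m t s) p - (of_int (t i) / of_nat d) * monom n m t s p)
           (\<lambda>p. xc p i ^ d * monom n m t s p)"
proof (rule same_classI_x[OF assms(1) regU_cmult_monom[where c = "- 1 / of_nat d"]])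
  fix p assume "p \<in> Udom n m"
  with assms(1) have "xc p i \<noteq> 0"
    by (simp add: Udom_def)
  show "GM n m d (monom n m t s) p - of_int (t i) / of_nat d * monom n m t s p
          - xc p i ^ d * monom n m t s p
        = theta_x i (\<lambda>q. - 1 / of_nat d * monom n m t s q) p
          + theta_x i (fpot n m d) p * (- 1 / of_nat d * monom n m t s p)"
    unfolding GM_monom theta_x_cmult_monom[OF assms(1) \<open>xc p i \<noteq> 0\<close>]
      theta_x_fpot[OF assms(1) \<open>xc p i \<noteq> 0\<close>]
    using assms(2) by (simp add: field_simps)
qed

lemma same_class_GM_monom_y:
  assumes "j \<in> {1..m}" "1 \<le> d"
  shows "same_class n m d
           (\<lambda>p. GM n m d (monom n m t s) p + (of_int (s j) / of_nat d) * monom n m t s p)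
           (\<lambda>p. yc p j ^ d * monom n m t s p)"
proof (rule same_classI_y[OF assms(1) regU_cmult_monom[where c = "1 / of_nat d"]])
  fix p assume "p \<in> Udom n m"
  with assms(1) have "yc p j \<noteq> 0"
    by (simp add: Udom_def)
  show "GM n m d (monom n m t s) p + of_int (s j) / of_nat d * monom n m t s p
          - yc p j ^ d * monom n m t s p
        = theta_y j (\<lambda>q. 1 / of_nat d * monom n m t s q) p
          + theta_y j (fpot n m d) p * (1 / of_nat d * monom n m t s p)"
    unfolding GM_monom theta_y_cmult_monom[OF assms(1) \<open>yc p j \<noteq> 0\<close>]
      theta_y_fpot[OF assms(1) \<open>yc p j \<noteq> 0\<close>]
    using assms(2) by (simp add: field_simps)
qed

theorem lemma2p15:
  fixes n m d :: nat and t s :: "nat \<Rightarrow> int"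
  assumes "m \<le> n" and "1 \<le> d"
  shows "(\<forall>i\<in>{2..n}. same_class n m d
            (\<lambda>p. GM n m d (monom n m t s) p - (of_int (t i) / of_nat d) * monom n m t s p)
            (\<lambda>p. xc p i ^ d * monom n m t s p))
       \<and> (\<forall>j\<in>{1..m}. same_class n m d
            (\<lambda>p. GM n m d (monom n m t s) p + (of_int (s j) / of_nat d) * monom n m t s p)
            (\<lambda>p. yc p j ^ d * monom n m t s p))"
proof -
  \<comment> \<open>\<open>m \<le> n\<close> only shapes the base S; the identities hold pointwise on all of U.\<close>
  show ?thesis
    using same_class_GM_monom_x[OF _ assms(2)] same_class_GM_monom_y[OF _ assms(2)] by blast
qed

end
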